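(* Fix an integer $J\ge 2$, a finite set $\mathcal{G}$ of group labels, and strictly decreasing positive weights $w_1>w_2>\cdots>w_J>0$. Consider a single query (indices $q$ suppressed) in which there are $J$ candidates $j=1,\dots,J$, each with a feature vector $X_j$, a group status $G_j\in\mathcal{G}$ and a real-valued integrable outcome $Y_j$, all defined on a common probability space. Let $\mathcal{I}=\{(X_j,G_j)\}_{j=1}^J$ be the Ranker's information, and let the ranking $j(\cdot):\{1,\dots,J\}\to\{1,\dots,J\}$ be a bijection that is a (measurable) function of $\mathcal{I}$, where $j(r)$ is the index of the candidate placed in rank $r$. Write $\mathbf{G}=(G_{j(1)},\dots,G_{j(J)})$ for the rank-ordered vector of group statuses. Suppose the Ranker is unbiased, i.e. for almost every realization of $\mathcal{I}$ the ranking $j(\cdot)$ maximizes $E\left[\sum_{r=1}^J w_r Y_{j(r)}\,\middle|\,\mathcal{I}\right]$ over all bijections of $\{1,\dots,J\}$. Then for all ranks $1\le a<b\le J$ and all $g\in\mathcal{G}^J$ with $P(\mathbf{G}=g)>0$, $$E\left[Y_{j(a)}-Y_{j(b)}\,\middle|\,\mathbf{G}=g\right]\ \ge\ 0.$$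
   Context: The outcomes $Y_j$ are realized after the ranking and do not depend on the ranking. An Auditor observes only the rank-ordered outcomes $(Y_{j(1)},\dots,Y_{j(J)})$ and the rank-ordered group statuses $\mathbf{G}$, not the features $X_j$. Rank 1 is the best rank and there are no ties. *)

theory Defs
  imports "HOL-Probability.Probability"
begin

definition info_algebra ::
  "'a measure \<Rightarrow> nat \<Rightarrow> (nat \<Rightarrow> 'a \<Rightarrow> 'x) \<Rightarrow> 'x measure \<Rightarrow> (nat \<Rightarrow> 'a \<Rightarrow> 'g) \<Rightarrow> 'a measure" where
  "info_algebra M J X MX G =
     sigma (space M)
       ((\<Union>j\<in>{1..J}. {X j -` A \<inter> space M | A. A \<in> sets MX}) \<union>
        (\<Union>j\<in>{1..J}. {G j -` A \<inter> space M | A. True}))"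

definition cond_exp_event :: "'a measure \<Rightarrow> 'a set \<Rightarrow> ('a \<Rightarrow> real) \<Rightarrow> real" where
  "cond_exp_event M A f = (\<integral>\<omega>. indicator A \<omega> * f \<omega> \<partial>M) / measure M A"

end

theory Submission
  imports Defs
begin

text \<open>Swapping the candidates placed at ranks a < b changes the Ranker's objective by
  (w a - w b) (Y at rank a - Y at rank b).  On any event of the Ranker's information on which the
  ranking is a fixed permutation, its optimality over the swapped permutation makes the conditional
  expected objective difference nonnegative, so the integral of the rank-a minus rank-b outcome over
  that event is nonnegative.  The event that the ranked group statuses equal g is itself in the
  Ranker's information; splitting it according to the finitely many values of the ranking and
  summing gives the claim.\<close>

lemma space_info_algebra [simp]: "space (info_algebra M J X MX G) = space M"
  unfolding info_algebra_def by (rule space_measure_of) auto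

lemma sets_info_algebra:
  "sets (info_algebra M J X MX G) = sigma_sets (space M)
     ((\<Union>j\<in>{1..J}. {X j -` A \<inter> space M | A. A \<in> sets MX}) \<union>
      (\<Union>j\<in>{1..J}. {G j -` A \<inter> space M | A. True}))"
  unfolding info_algebra_def by (rule sets_measure_of) auto

lemma subalgebra_info_algebra:
  assumes "\<And>j. j \<in> {1..J} \<Longrightarrow> X j \<in> M \<rightarrow>\<^sub>M MX"
    and "\<And>j. j \<in> {1..J} \<Longrightarrow> G j \<in> M \<rightarrow>\<^sub>M count_space UNIV"
  shows "subalgebra M (info_algebra M J X MX G)"
  unfolding subalgebra_def sets_info_algebra
proof (intro conjI space_info_algebra sets.sigma_sets_subset subsetI)
  fix S
  assume "S \<in> (\<Union>j\<in>{1..J}. {X j -` A \<inter> space M | A. A \<in> sets MX}) \<union>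
              (\<Union>j\<in>{1..J}. {G j -` A \<inter> space M | A. True})"
  then show "S \<in> sets M"
  proof (elim UnE UN_E CollectE exE conjE)
    fix j A assume "j \<in> {1..J}" "S = X j -` A \<inter> space M" "A \<in> sets MX"
    then show ?thesis using assms(1) measurable_sets by blast
  next
    fix j A assume "j \<in> {1..J}" "S = G j -` A \<inter> space M"
    then show ?thesis using assms(2)[of j] measurable_sets[of "G j" M "count_space UNIV" A] by auto
  qed
qed

lemma info_algebra_status_event:
  assumes "j \<in> {1..J}"
  shows "{\<omega> \<in> space M. G j \<omega> = c} \<in> sets (info_algebra M J X MX G)"
proof -
  have "G j -` {c} \<inter> space M \<in> sets (info_algebra M J X MX G)"
    unfolding sets_info_algebra using assms by (intro sigma_sets.Basic) blast
  moreover have "G j -` {c} \<inter> space M = {\<omega> \<in> space M. G j \<omega> = c}" by auto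
  ultimately show ?thesis by simp
qed

lemma sigma_finite_subalgebra_info_algebra:
  assumes "prob_space M"
    and "\<And>j. j \<in> {1..J} \<Longrightarrow> X j \<in> M \<rightarrow>\<^sub>M MX"
    and "\<And>j. j \<in> {1..J} \<Longrightarrow> G j \<in> M \<rightarrow>\<^sub>M count_space UNIV"
  shows "sigma_finite_subalgebra M (info_algebra M J X MX G)"
proof -
  interpret prob_space M by fact
  show ?thesis
    by (intro finite_measure_subalgebra_is_sigma_finite finite_measure_subalgebra.intro
          finite_measure_axioms finite_measure_subalgebra_axioms.intro subalgebra_info_algebra assms)
qed

lemma integral_split_finite_valued:
  fixes f :: "'p \<Rightarrow> 'a \<Rightarrow> real"
  assumes "finite P" "\<And>\<omega>. \<omega> \<in> space M \<Longrightarrow> \<rho> \<omega> \<in> P"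
    and "\<And>p. p \<in> P \<Longrightarrow> {\<omega> \<in> space M. \<rho> \<omega> = p} \<in> sets M"
    and "\<And>p. p \<in> P \<Longrightarrow> integrable M (f p)"
  shows "(\<integral>\<omega>. f (\<rho> \<omega>) \<omega> \<partial>M) = (\<Sum>p\<in>P. \<integral>\<omega>. indicator {\<omega> \<in> space M. \<rho> \<omega> = p} \<omega> * f p \<omega> \<partial>M)"
proof -
  have "(\<integral>\<omega>. f (\<rho> \<omega>) \<omega> \<partial>M) = (\<integral>\<omega>. (\<Sum>p\<in>P. indicator {\<omega> \<in> space M. \<rho> \<omega> = p} \<omega> * f p \<omega>) \<partial>M)"
  proof (rule Bochner_Integration.integral_cong[OF refl])
    fix \<omega> assume "\<omega> \<in> space M"
    then have "(\<Sum>p\<in>P. indicator {\<omega> \<in> space M. \<rho> \<omega> = p} \<omega> * f p \<omega>)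
        = (\<Sum>p\<in>P. if p = \<rho> \<omega> then f p \<omega> else 0)"
      by (intro sum.cong) (auto simp: indicator_def)
    also have "\<dots> = f (\<rho> \<omega>) \<omega>"
      using assms(1,2) \<open>\<omega> \<in> space M\<close> by (simp add: sum.delta)
    finally show "f (\<rho> \<omega>) \<omega> = (\<Sum>p\<in>P. indicator {\<omega> \<in> space M. \<rho> \<omega> = p} \<omega> * f p \<omega>)" ..
  qed
  also have "\<dots> = (\<Sum>p\<in>P. \<integral>\<omega>. indicator {\<omega> \<in> space M. \<rho> \<omega> = p} \<omega> * f p \<omega> \<partial>M)"
    using integrable_mult_indicator[OF assms(3) assms(4)]
    by (intro Bochner_Integration.integral_sum) simp
  finally show ?thesis .
qed

lemma (in sigma_finite_subalgebra) integral_indicator_mono_real_cond_exp: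
  assumes "E \<in> sets F" "integrable M f" "integrable M g"
    and "AE \<omega> in M. \<omega> \<in> E \<longrightarrow> real_cond_exp M F f \<omega> \<le> real_cond_exp M F g \<omega>"
  shows "(\<integral>\<omega>. indicator E \<omega> * f \<omega> \<partial>M) \<le> (\<integral>\<omega>. indicator E \<omega> * g \<omega> \<partial>M)"
proof -
  have E: "E \<in> sets M" using assms(1) subalg by (auto simp: subalgebra_def)
  have "(\<integral>\<omega>. indicator E \<omega> * f \<omega> \<partial>M) = (\<integral>\<omega>. indicator E \<omega> * real_cond_exp M F f \<omega> \<partial>M)"
    using real_cond_exp_intA[OF assms(2,1)] by (simp add: set_lebesgue_integral_def)
  also have "\<dots> \<le> (\<integral>\<omega>. indicator E \<omega> * real_cond_exp M F g \<omega> \<partial>M)"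
    using assms(4) integrable_mult_indicator[OF E real_cond_exp_int(1)] assms(2,3)
    by (intro integral_mono_AE) (auto simp: indicator_def)
  also have "\<dots> = (\<integral>\<omega>. indicator E \<omega> * g \<omega> \<partial>M)"
    using real_cond_exp_intA[OF assms(3,1)] by (simp add: set_lebesgue_integral_def)
  finally show ?thesis .
qed

lemma weighted_sum_transpose_diff:
  fixes w y :: "nat \<Rightarrow> real"
  assumes "finite I" "a \<in> I" "b \<in> I" "a \<noteq> b"
  shows "(\<Sum>r\<in>I. w r * y (p r)) - (\<Sum>r\<in>I. w r * y (p (Transposition.transpose a b r)))
    = (w a - w b) * (y (p a) - y (p b))"
proof -
  have "(\<Sum>r\<in>I. w r * y (p r)) - (\<Sum>r\<in>I. w r * y (p (Transposition.transpose a b r)))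
      = (\<Sum>r\<in>I. w r * y (p r) - w r * y (p (Transposition.transpose a b r)))"
    by (simp add: sum_subtractf)
  also have "\<dots> = (\<Sum>r\<in>{a, b}. w r * y (p r) - w r * y (p (Transposition.transpose a b r)))"
    using assms by (intro sum.mono_neutral_right) auto
  also have "\<dots> = (w a - w b) * (y (p a) - y (p b))"
    using assms(4) by (simp add: algebra_simps)
  finally show ?thesis .
qed

lemma (in sigma_finite_subalgebra) swap_optimal_imp_integral_diff_nonneg:
  fixes I :: "nat set" and w :: "nat \<Rightarrow> real" and Y :: "nat \<Rightarrow> 'a \<Rightarrow> real"
  defines "S \<equiv> \<lambda>q \<omega>. \<Sum>r\<in>I. w r * Y (q r) \<omega>"
  assumes "finite I" "a \<in> I" "b \<in> I" "w b < w a" "E \<in> sets F"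
    and "\<And>r. r \<in> I \<Longrightarrow> integrable M (Y (p r))"
    and "AE \<omega> in M. \<omega> \<in> E \<longrightarrow>
           real_cond_exp M F (S (p \<circ> Transposition.transpose a b)) \<omega> \<le> real_cond_exp M F (S p) \<omega>"
  shows "0 \<le> (\<integral>\<omega>. indicator E \<omega> * (Y (p a) \<omega> - Y (p b) \<omega>) \<partial>M)"
proof -
  let ?q = "p \<circ> Transposition.transpose a b"
  have "a \<noteq> b" using assms(5) by auto
  have E: "E \<in> sets M" using assms(6) subalg by (auto simp: subalgebra_def)
  have int_S: "integrable M (S q)" if "\<And>r. r \<in> I \<Longrightarrow> integrable M (Y (q r))" for q
    unfolding S_def using that by auto
  have int_Sp: "integrable M (S p)" using assms(7) by (rule int_S)
  have "Transposition.transpose a b r \<in> I" if "r \<in> I" for r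
    using that assms(3,4) by (auto simp: Transposition.transpose_def)
  then have int_Sq: "integrable M (S ?q)" using assms(7) by (intro int_S) auto
  have "0 \<le> (\<integral>\<omega>. indicator E \<omega> * S p \<omega> \<partial>M) - (\<integral>\<omega>. indicator E \<omega> * S ?q \<omega> \<partial>M)"
    using integral_indicator_mono_real_cond_exp[OF assms(6) int_Sq int_Sp assms(8)] by simp
  also have "\<dots> = (\<integral>\<omega>. indicator E \<omega> * (S p \<omega> - S ?q \<omega>) \<partial>M)"
    using integrable_mult_indicator[OF E int_Sp] integrable_mult_indicator[OF E int_Sq]
    by (simp add: right_diff_distrib)
  also have "\<dots> = (\<integral>\<omega>. (w a - w b) * (indicator E \<omega> * (Y (p a) \<omega> - Y (p b) \<omega>)) \<partial>M)"
    using weighted_sum_transpose_diff[OF assms(2-4) \<open>a \<noteq> b\<close>, of w "\<lambda>j. Y j _"]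
    by (simp add: S_def mult.left_commute)
  also have "\<dots> = (w a - w b) * (\<integral>\<omega>. indicator E \<omega> * (Y (p a) \<omega> - Y (p b) \<omega>) \<partial>M)"
    by (rule integral_mult_right_zero)
  finally show ?thesis using assms(5) by (simp add: zero_le_mult_iff)
qed

locale unbiased_ranker = prob_space M
  for M :: "'a measure" +
  fixes J :: nat
    and w :: "nat \<Rightarrow> real"
    and X :: "nat \<Rightarrow> 'a \<Rightarrow> 'x" and MX :: "'x measure"
    and G :: "nat \<Rightarrow> 'a \<Rightarrow> 'g"
    and Y :: "nat \<Rightarrow> 'a \<Rightarrow> real"
    and \<sigma> :: "'a \<Rightarrow> nat \<Rightarrow> nat"
  assumes w_dec: "\<And>r s. 1 \<le> r \<Longrightarrow> r < s \<Longrightarrow> s \<le> J \<Longrightarrow> w r > w s"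
    and X_meas: "\<And>j. j \<in> {1..J} \<Longrightarrow> X j \<in> M \<rightarrow>\<^sub>M MX"
    and G_meas: "\<And>j. j \<in> {1..J} \<Longrightarrow> G j \<in> M \<rightarrow>\<^sub>M count_space UNIV"
    and Y_int: "\<And>j. j \<in> {1..J} \<Longrightarrow> integrable M (Y j)"
    and \<sigma>_bij: "\<And>\<omega>. \<omega> \<in> space M \<Longrightarrow> bij_betw (\<sigma> \<omega>) {1..J} {1..J}"
    and \<sigma>_meas: "\<And>r j. r \<in> {1..J} \<Longrightarrow> j \<in> {1..J} \<Longrightarrow>
                  {\<omega> \<in> space M. \<sigma> \<omega> r = j} \<in> sets (info_algebra M J X MX G)"
    and unbiased: "AE \<omega> in M. \<forall>\<pi>. bij_betw \<pi> {1..J} {1..J} \<longrightarrow>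
         real_cond_exp M (info_algebra M J X MX G) (\<lambda>\<omega>'. \<Sum>r\<in>{1..J}. w r * Y (\<pi> r) \<omega>') \<omega>
         \<le> real_cond_exp M (info_algebra M J X MX G) (\<lambda>\<omega>'. \<Sum>r\<in>{1..J}. w r * Y (\<sigma> \<omega> r) \<omega>') \<omega>"
begin

abbreviation info :: "'a measure" where
  "info \<equiv> info_algebra M J X MX G"

sublocale info: sigma_finite_subalgebra M info
  by (rule sigma_finite_subalgebra_info_algebra[OF prob_space_axioms X_meas G_meas])

definition ranked_status_event :: "(nat \<Rightarrow> 'g) \<Rightarrow> 'a set" where
  "ranked_status_event g = {\<omega> \<in> space M. \<forall>r\<in>{1..J}. G (\<sigma> \<omega> r) \<omega> = g r}"

text \<open>Extended by the identity outside the ranks, the ranking takes its values among the finitely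
  many permutations of the ranks.\<close>

definition ranking_perm :: "'a \<Rightarrow> nat \<Rightarrow> nat" where
  "ranking_perm \<omega> r = (if r \<in> {1..J} then \<sigma> \<omega> r else r)"

lemma sets_info_subset: "sets info \<subseteq> sets M"
  using info.subalg by (simp add: subalgebra_def)

lemma ranking_in_ranks: "\<omega> \<in> space M \<Longrightarrow> r \<in> {1..J} \<Longrightarrow> \<sigma> \<omega> r \<in> {1..J}"
  by (meson \<sigma>_bij bij_betwE)

lemma ranking_perm_permutes:
  assumes "\<omega> \<in> space M"
  shows "ranking_perm \<omega> permutes {1..J}"
proof (rule bij_imp_permutes)
  show "bij_betw (ranking_perm \<omega>) {1..J} {1..J}"
    using \<sigma>_bij[OF assms] by (subst bij_betw_cong[where g = "\<sigma> \<omega>"]) (auto simp: ranking_perm_def)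
qed (auto simp: ranking_perm_def)

lemma sets_ranked_status_event: "ranked_status_event g \<in> sets info"
proof -
  have "{\<omega> \<in> space info. \<forall>r\<in>{1..J}. \<exists>j\<in>{1..J}. \<sigma> \<omega> r = j \<and> G j \<omega> = g r} \<in> sets info"
  proof (intro sets.sets_Collect_finite_All sets.sets_Collect_finite_Ex sets.sets_Collect_conj)
    fix r j assume "r \<in> {1..J}" "j \<in> {1..J}"
    then show "{\<omega> \<in> space info. \<sigma> \<omega> r = j} \<in> sets info"
      and "{\<omega> \<in> space info. G j \<omega> = g r} \<in> sets info"
      using \<sigma>_meas info_algebra_status_event by simp_all
  qed simp_all
  moreover have "{\<omega> \<in> space info. \<forall>r\<in>{1..J}. \<exists>j\<in>{1..J}. \<sigma> \<omega> r = j \<and> G j \<omega> = g r}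
      = ranked_status_event g"
    using ranking_in_ranks by (auto simp: ranked_status_event_def)
  ultimately show ?thesis by (simp only:)
qed

lemma sets_ranking_perm_eq:
  assumes "p permutes {1..J}"
  shows "{\<omega> \<in> space M. ranking_perm \<omega> = p} \<in> sets info"
proof -
  have "{\<omega> \<in> space info. \<forall>r\<in>{1..J}. \<sigma> \<omega> r = p r} \<in> sets info"
  proof (rule sets.sets_Collect_finite_All)
    fix r assume "r \<in> {1..J}"
    then show "{\<omega> \<in> space info. \<sigma> \<omega> r = p r} \<in> sets info"
      using \<sigma>_meas permutes_in_image[OF assms] by simp
  qed simp
  moreover have "ranking_perm \<omega> = p \<longleftrightarrow> (\<forall>r\<in>{1..J}. \<sigma> \<omega> r = p r)" for \<omega>
    using permutes_not_in[OF assms] by (auto simp: ranking_perm_def fun_eq_iff)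
  ultimately show ?thesis by simp
qed

lemma swap_on_ranking_event_nonneg:
  assumes "a \<in> {1..J}" "b \<in> {1..J}" "a < b" "p permutes {1..J}"
    and "E \<in> sets info" "E \<subseteq> {\<omega> \<in> space M. ranking_perm \<omega> = p}"
  shows "0 \<le> (\<integral>\<omega>. indicator E \<omega> * (Y (p a) \<omega> - Y (p b) \<omega>) \<partial>M)"
proof (rule info.swap_optimal_imp_integral_diff_nonneg[where I = "{1..J}" and w = w and Y = Y and p = p])
  show "integrable M (Y (p r))" if "r \<in> {1..J}" for r
    using Y_int permutes_in_image[OF assms(4)] that by blast
  have bij_swap: "bij_betw (p \<circ> Transposition.transpose a b) {1..J} {1..J}"
    using assms(1,2,4) by (intro permutes_imp_bij permutes_compose permutes_swap_id)
  show "AE \<omega> in M. \<omega> \<in> E \<longrightarrow>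
      real_cond_exp M info (\<lambda>\<omega>'. \<Sum>r\<in>{1..J}. w r * Y ((p \<circ> Transposition.transpose a b) r) \<omega>') \<omega>
      \<le> real_cond_exp M info (\<lambda>\<omega>'. \<Sum>r\<in>{1..J}. w r * Y (p r) \<omega>') \<omega>"
    using unbiased
  proof eventually_elim
    case (elim \<omega>)
    show ?case
    proof
      assume "\<omega> \<in> E"
      then have "\<sigma> \<omega> r = p r" if "r \<in> {1..J}" for r
        using assms(6) that by (auto simp: ranking_perm_def)
      then have "(\<lambda>\<omega>'. \<Sum>r\<in>{1..J}. w r * Y (\<sigma> \<omega> r) \<omega>') = (\<lambda>\<omega>'. \<Sum>r\<in>{1..J}. w r * Y (p r) \<omega>')"
        by (intro ext sum.cong) simp_all
      with elim[rule_format, OF bij_swap]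
      show "real_cond_exp M info (\<lambda>\<omega>'. \<Sum>r\<in>{1..J}. w r * Y ((p \<circ> Transposition.transpose a b) r) \<omega>') \<omega>
          \<le> real_cond_exp M info (\<lambda>\<omega>'. \<Sum>r\<in>{1..J}. w r * Y (p r) \<omega>') \<omega>"
        by simp
    qed
  qed
qed (use assms w_dec in auto)

lemma integral_ranked_diff_eq_sum:
  assumes "a \<in> {1..J}" "b \<in> {1..J}" "A \<in> sets M"
  shows "(\<integral>\<omega>. indicator A \<omega> * (Y (\<sigma> \<omega> a) \<omega> - Y (\<sigma> \<omega> b) \<omega>) \<partial>M)
    = (\<Sum>p | p permutes {1..J}. \<integral>\<omega>. indicator {\<omega> \<in> space M. ranking_perm \<omega> = p} \<omega> *
         (indicator A \<omega> * (Y (p a) \<omega> - Y (p b) \<omega>)) \<partial>M)"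
proof -
  have "(\<integral>\<omega>. indicator A \<omega> * (Y (\<sigma> \<omega> a) \<omega> - Y (\<sigma> \<omega> b) \<omega>) \<partial>M)
      = (\<integral>\<omega>. (\<lambda>p \<omega>. indicator A \<omega> * (Y (p a) \<omega> - Y (p b) \<omega>)) (ranking_perm \<omega>) \<omega> \<partial>M)"
    using assms(1,2) by (simp add: ranking_perm_def)
  also have "\<dots> = (\<Sum>p | p permutes {1..J}. \<integral>\<omega>. indicator {\<omega> \<in> space M. ranking_perm \<omega> = p} \<omega> *
         (indicator A \<omega> * (Y (p a) \<omega> - Y (p b) \<omega>)) \<partial>M)"
  proof (rule integral_split_finite_valued)
    show "integrable M (\<lambda>\<omega>. indicator A \<omega> * (Y (p a) \<omega> - Y (p b) \<omega>))"
      if "p \<in> {p. p permutes {1..J}}" for p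
    proof -
      have "p a \<in> {1..J}" "p b \<in> {1..J}"
        using permutes_in_image[of p "{1..J}"] that assms(1,2) by auto
      then have "integrable M (\<lambda>\<omega>. Y (p a) \<omega> - Y (p b) \<omega>)"
        using Y_int by blast
      then have "integrable M (\<lambda>\<omega>. indicator A \<omega> *\<^sub>R (Y (p a) \<omega> - Y (p b) \<omega>))"
        using assms(3) by (intro integrable_mult_indicator)
      then show ?thesis by simp
    qed
  qed (use finite_permutations ranking_perm_permutes sets_ranking_perm_eq sets_info_subset in auto)
  finally show ?thesis .
qed

lemma ranked_outcome_diff_nonneg:
  assumes "1 \<le> a" "a < b" "b \<le> J"
  shows "0 \<le> cond_exp_event M (ranked_status_event g) (\<lambda>\<omega>. Y (\<sigma> \<omega> a) \<omega> - Y (\<sigma> \<omega> b) \<omega>)"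
proof -
  let ?A = "ranked_status_event g"
  let ?E = "\<lambda>p. {\<omega> \<in> space M. ranking_perm \<omega> = p}"
  have ab: "a \<in> {1..J}" "b \<in> {1..J}" using assms by auto
  have A: "?A \<in> sets M" using sets_ranked_status_event sets_info_subset by blast
  have "0 \<le> (\<Sum>p | p permutes {1..J}. \<integral>\<omega>. indicator (?E p) \<omega> * (indicator ?A \<omega> * (Y (p a) \<omega> - Y (p b) \<omega>)) \<partial>M)"
  proof (rule sum_nonneg)
    fix p assume "p \<in> {p. p permutes {1..J}}"
    then have "0 \<le> (\<integral>\<omega>. indicator (?A \<inter> ?E p) \<omega> * (Y (p a) \<omega> - Y (p b) \<omega>) \<partial>M)"
      using ab assms(2) sets_ranked_status_event sets_ranking_perm_eq
      by (intro swap_on_ranking_event_nonneg) auto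
    then show "0 \<le> (\<integral>\<omega>. indicator (?E p) \<omega> * (indicator ?A \<omega> * (Y (p a) \<omega> - Y (p b) \<omega>)) \<partial>M)"
      by (simp add: indicator_inter_arith ac_simps)
  qed
  then show ?thesis
    unfolding cond_exp_event_def integral_ranked_diff_eq_sum[OF ab A] by simp
qed

end

theorem proposition1:
  fixes M :: "'a measure"
    and J :: nat
    and w :: "nat \<Rightarrow> real"
    and X :: "nat \<Rightarrow> 'a \<Rightarrow> 'x" and MX :: "'x measure"
    and G :: "nat \<Rightarrow> 'a \<Rightarrow> 'g::finite"
    and Y :: "nat \<Rightarrow> 'a \<Rightarrow> real"
    and \<sigma> :: "'a \<Rightarrow> nat \<Rightarrow> nat"
  assumes "prob_space M"
    and "J \<ge> 2"
    and w_dec: "\<And>r s. 1 \<le> r \<Longrightarrow> r < s \<Longrightarrow> s \<le> J \<Longrightarrow> w r > w s"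
    and w_pos: "w J > 0"
    and X_meas: "\<And>j. j \<in> {1..J} \<Longrightarrow> X j \<in> M \<rightarrow>\<^sub>M MX"
    and G_meas: "\<And>j. j \<in> {1..J} \<Longrightarrow> G j \<in> M \<rightarrow>\<^sub>M count_space UNIV"
    and Y_int: "\<And>j. j \<in> {1..J} \<Longrightarrow> integrable M (Y j)"
    and \<sigma>_bij: "\<And>\<omega>. \<omega> \<in> space M \<Longrightarrow> bij_betw (\<sigma> \<omega>) {1..J} {1..J}"
    and \<sigma>_meas: "\<And>r j. r \<in> {1..J} \<Longrightarrow> j \<in> {1..J} \<Longrightarrow>
                  {\<omega> \<in> space M. \<sigma> \<omega> r = j} \<in> sets (info_algebra M J X MX G)"
    and unbiased: "AE \<omega> in M. \<forall>\<pi>. bij_betw \<pi> {1..J} {1..J} \<longrightarrow>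
         real_cond_exp M (info_algebra M J X MX G) (\<lambda>\<omega>'. \<Sum>r\<in>{1..J}. w r * Y (\<pi> r) \<omega>') \<omega>
         \<le> real_cond_exp M (info_algebra M J X MX G) (\<lambda>\<omega>'. \<Sum>r\<in>{1..J}. w r * Y (\<sigma> \<omega> r) \<omega>') \<omega>"
  shows "\<forall>a b (g :: nat \<Rightarrow> 'g). 1 \<le> a \<longrightarrow> a < b \<longrightarrow> b \<le> J \<longrightarrow>
           measure M {\<omega> \<in> space M. \<forall>r\<in>{1..J}. G (\<sigma> \<omega> r) \<omega> = g r} > 0 \<longrightarrow>
           cond_exp_event M {\<omega> \<in> space M. \<forall>r\<in>{1..J}. G (\<sigma> \<omega> r) \<omega> = g r}
              (\<lambda>\<omega>. Y (\<sigma> \<omega> a) \<omega> - Y (\<sigma> \<omega> b) \<omega>) \<ge> 0"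
proof -
  interpret unbiased_ranker M J w X MX G Y \<sigma>
    by (intro unbiased_ranker.intro[OF assms(1)] unbiased_ranker_axioms.intro) (fact assms)+
  show ?thesis
    using ranked_outcome_diff_nonneg unfolding ranked_status_event_def by blast
qed

end
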